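(* Let $p,q\in\mathcal{S}$, $k^*=\arg\max_kq_k$, $k_*=\arg\min_kq_k$, $\delta\in[0,\log(1/p_{k^*}))$, and for each $m$ let $Y^m\sim\phi_\delta^m$. The map $\beta\mapsto H(T(q,p,\beta)\|q)$ is a continuous strictly decreasing bijection from $\mathbb{R}$ onto the open interval $I=(\log(1/q_{k^*}),\log(1/q_{k_*}))$; for $t\in I$ let $\beta(t)$ be the unique $\beta\in\mathbb{R}$ with $H(T(q,p,\beta)\|q)=t$. Then the sequence $\{-\frac1m\log q^m(Y^m)\}_{m\in\mathbb{N}}$ (i.e. the negative per-symbol reward) satisfies a large deviation principle with rate function $$J_\delta(t)=D_{\mathrm{KL}}\big(T(q,p,\beta(t))\,\|\,\phi_\delta\big)\quad (t\in I),$$ $J_\delta(\log(1/q_{k^*}))=\log(1/\phi_\delta(k^* ))$, $J_\delta(\log(1/q_{k_*}))=\log(1/\phi_\delta(k_* ))$, and $J_\delta(t)=+\infty$ for $t\notin\bar I$.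
   Context: Fix $K\ge2$, $\zeta\in(0,1/K)$. $\mathcal{S}$ is the set of probability vectors on $[K]$ with all entries $>\zeta$ and pairwise distinct. $p^m(y^m)=\prod_i p_{y_i}$ denotes the product distribution on $[K]^m$; the reward of $y^m$ is $r(y^m)=\log q^m(y^m)$. $H(a\|b)=\sum a\log(1/b)$, $D_{\mathrm{KL}}(a\|b)=\sum a\log(a/b)$. Mismatched tilt: $T(q,p,\alpha)_k=p_kq_k^\alpha/\sum_jp_jq_j^\alpha$ for $\alpha\in\mathbb{R}$. For $\delta\in[0,\log(1/p_{k^*}))$, $\alpha(\delta)$ is the unique $\alpha\ge0$ with $D_{\mathrm{KL}}(T(q,p,\alpha)\|p)=\delta$, and $\phi_\delta=T(q,p,\alpha(\delta))$. A sequence of real random variables $\{Z_n\}$ satisfies a large deviation principle (LDP) with rate function $J:\mathbb{R}\to[0,\infty]$ if $J$ is lower semicontinuous with compact level sets and for every Borel set $B$: $-\inf_{t\in B^\circ}J(t)\le\liminf_n\frac1n\log\mathbb{P}(Z_n\in B)\le\limsup_n\frac1n\log\mathbb{P}(Z_n\in B)\le-\inf_{t\in\bar B}J(t)$. *)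

theory Defs
  imports "HOL-Analysis.Analysis"
begin

text \<open>Probability vectors on [K] are represented as functions nat => real,
  with index set {..<K} (i.e. symbols 0,...,K-1).\<close>

definition in_S :: "nat \<Rightarrow> real \<Rightarrow> (nat \<Rightarrow> real) \<Rightarrow> bool" where
  "in_S K \<zeta> p \<longleftrightarrow> (\<Sum>k<K. p k) = 1 \<and> (\<forall>k<K. p k > \<zeta>)
      \<and> (\<forall>i<K. \<forall>j<K. i \<noteq> j \<longrightarrow> p i \<noteq> p j)"

definition cross_ent :: "nat \<Rightarrow> (nat \<Rightarrow> real) \<Rightarrow> (nat \<Rightarrow> real) \<Rightarrow> real" where
  "cross_ent K a b = (\<Sum>k<K. a k * ln (1 / b k))"

definition KL :: "nat \<Rightarrow> (nat \<Rightarrow> real) \<Rightarrow> (nat \<Rightarrow> real) \<Rightarrow> real" where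
  "KL K a b = (\<Sum>k<K. a k * ln (a k / b k))"

definition tilt :: "nat \<Rightarrow> (nat \<Rightarrow> real) \<Rightarrow> (nat \<Rightarrow> real) \<Rightarrow> real \<Rightarrow> nat \<Rightarrow> real" where
  "tilt K q p \<alpha> k = p k * q k powr \<alpha> / (\<Sum>j<K. p j * q j powr \<alpha>)"

definition alpha_of :: "nat \<Rightarrow> (nat \<Rightarrow> real) \<Rightarrow> (nat \<Rightarrow> real) \<Rightarrow> real \<Rightarrow> real" where
  "alpha_of K q p \<delta> = (THE \<alpha>. \<alpha> \<ge> 0 \<and> KL K (tilt K q p \<alpha>) p = \<delta>)"

definition phi :: "nat \<Rightarrow> (nat \<Rightarrow> real) \<Rightarrow> (nat \<Rightarrow> real) \<Rightarrow> real \<Rightarrow> nat \<Rightarrow> real" where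
  "phi K q p \<delta> = tilt K q p (alpha_of K q p \<delta>)"

text \<open>Law of Z_m = -(1/m) log q^m(Y^m) with Y^m ~ r^m (product distribution on [K]^m):
  P(Z_m \<in> B).\<close>
definition neg_reward_prob ::
  "nat \<Rightarrow> (nat \<Rightarrow> real) \<Rightarrow> (nat \<Rightarrow> real) \<Rightarrow> nat \<Rightarrow> real set \<Rightarrow> real" where
  "neg_reward_prob K q r m B =
     (\<Sum>y\<in>{y\<in>PiE {..<m} (\<lambda>_. {..<K}).
            - (1 / real m) * ln (\<Prod>i<m. q (y i)) \<in> B}.
        \<Prod>i<m. r (y i))"

definition elog :: "real \<Rightarrow> ereal" where
  "elog x = (if x \<le> 0 then -\<infinity> else ereal (ln x))"

text \<open>Large deviation principle for a sequence of real random variables,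
  given through their laws P n B = P(Z_n \<in> B), with rate function J.\<close>
definition LDP :: "(nat \<Rightarrow> real set \<Rightarrow> real) \<Rightarrow> (real \<Rightarrow> ereal) \<Rightarrow> bool" where
  "LDP P J \<longleftrightarrow>
     (\<forall>t. J t \<ge> 0) \<and>
     (\<forall>c::ereal. open {t. c < J t}) \<and>
     (\<forall>c::real. compact {t. J t \<le> ereal c}) \<and>
     (\<forall>B \<in> sets borel.
        - (INF t\<in>interior B. J t)
          \<le> liminf (\<lambda>n. ereal (1 / real n) * elog (P n B)) \<and>
        liminf (\<lambda>n. ereal (1 / real n) * elog (P n B))
          \<le> limsup (\<lambda>n. ereal (1 / real n) * elog (P n B)) \<and>
        limsup (\<lambda>n. ereal (1 / real n) * elog (P n B))
          \<le> - (INF t\<in>closure B. J t))"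

end

theory Submission
  imports Defs
begin

text \<open>With \<open>a k = ln (1 / q k)\<close> the mismatched tilts \<open>T(q,p,\<beta>)\<close> form the exponential family
  of \<open>p\<close> with statistic \<open>a\<close> and natural parameter \<open>-\<beta>\<close>, and \<open>H(T(q,p,\<beta>)\<parallel>q)\<close> is the mean of
  \<open>a\<close> under it. This mean is strictly increasing in the natural parameter (the difference of two
  means is a symmetrised double sum of nonnegative terms) and sweeps out the open interval between
  the extreme values of \<open>a\<close>. The negative
  per-symbol reward is the empirical mean of \<open>a\<close> under \<open>\<phi>\<^sub>\<delta>\<^sup>m\<close>, and \<open>\<phi>\<^sub>\<delta>\<close> lies in the same
  family, so Cramer's theorem on a finite alphabet applies: the rate is the Legendre transform of
  the cumulant generating function of \<open>a\<close> under \<open>\<phi>\<^sub>\<delta>\<close>. At an interior point \<open>t\<close> the supremum is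
  attained at the tilt with mean \<open>t\<close> and equals its divergence from \<open>\<phi>\<^sub>\<delta>\<close>; at an extreme value
  of \<open>a\<close> it is \<open>-ln \<phi>\<^sub>\<delta>\<close> of that atom, and outside the range it is infinite. The upper bound is
  the Chernoff bound on either side of the mean; the lower bound changes measure to the tilt with
  mean \<open>t\<close>, under which the empirical mean concentrates near \<open>t\<close>.\<close>

definition mgf :: "nat \<Rightarrow> (nat \<Rightarrow> real) \<Rightarrow> (nat \<Rightarrow> real) \<Rightarrow> real \<Rightarrow> real" where
  "mgf K a w \<theta> = (\<Sum>k<K. w k * exp (\<theta> * a k))"

definition cgf :: "nat \<Rightarrow> (nat \<Rightarrow> real) \<Rightarrow> (nat \<Rightarrow> real) \<Rightarrow> real \<Rightarrow> real" where
  "cgf K a w \<theta> = ln (mgf K a w \<theta>)"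

definition tilted :: "nat \<Rightarrow> (nat \<Rightarrow> real) \<Rightarrow> (nat \<Rightarrow> real) \<Rightarrow> real \<Rightarrow> nat \<Rightarrow> real" where
  "tilted K a w \<theta> k = w k * exp (\<theta> * a k) / mgf K a w \<theta>"

definition tilted_mean :: "nat \<Rightarrow> (nat \<Rightarrow> real) \<Rightarrow> (nat \<Rightarrow> real) \<Rightarrow> real \<Rightarrow> real" where
  "tilted_mean K a w \<theta> = (\<Sum>k<K. tilted K a w \<theta> k * a k)"

definition cramer_rate :: "nat \<Rightarrow> (nat \<Rightarrow> real) \<Rightarrow> (nat \<Rightarrow> real) \<Rightarrow> real \<Rightarrow> ereal" where
  "cramer_rate K a w t = (SUP \<theta>. ereal (\<theta> * t - cgf K a w \<theta>))"

definition empirical_mean_prob ::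
  "nat \<Rightarrow> (nat \<Rightarrow> real) \<Rightarrow> (nat \<Rightarrow> real) \<Rightarrow> nat \<Rightarrow> real set \<Rightarrow> real" where
  "empirical_mean_prob K a w m S =
     (\<Sum>y\<in>PiE {..<m} (\<lambda>_. {..<K}).
        if (\<Sum>i<m. a (y i)) / real m \<in> S then \<Prod>i<m. w (y i) else 0)"

abbreviation log_rate :: "nat \<Rightarrow> real \<Rightarrow> ereal" where
  "log_rate n P \<equiv> ereal (1 / real n) * elog P"

lemma mgf_cong:
  "(\<And>k. k < K \<Longrightarrow> v k = v' k) \<Longrightarrow> mgf K a v = mgf K a v'"
  unfolding mgf_def by (intro ext sum.cong) auto

lemma mgf_reflect: "mgf K (\<lambda>k. - a k) w \<theta> = mgf K a w (- \<theta>)"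
  unfolding mgf_def by simp

lemma cgf_reflect: "cgf K (\<lambda>k. - a k) w \<theta> = cgf K a w (- \<theta>)"
  unfolding cgf_def mgf_reflect ..

lemma tilted_mean_reflect: "tilted_mean K (\<lambda>k. - a k) w \<theta> = - tilted_mean K a w (- \<theta>)"
  unfolding tilted_mean_def tilted_def mgf_reflect by (simp add: sum_negf[symmetric])

lemma cramer_rate_reflect: "cramer_rate K (\<lambda>k. - a k) w (- t) = cramer_rate K a w t"
  unfolding cramer_rate_def cgf_reflect
  by (intro antisym SUP_least) (auto intro: SUP_upper2[where i="- _"])

lemma empirical_mean_prob_reflect:
  "empirical_mean_prob K (\<lambda>k. - a k) w m (uminus ` S) = empirical_mean_prob K a w m S"
  unfolding empirical_mean_prob_def
  by (intro sum.cong refl) (auto simp: sum_negf image_iff intro: bexI[of _ "- _"])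

lemma open_cramer_rate_superlevel: "open {t. c < cramer_rate K a w t}"
proof -
  have "{t. c < cramer_rate K a w t} = (\<Union>\<theta>. {t. c < ereal (\<theta> * t - cgf K a w \<theta>)})"
    by (auto simp: cramer_rate_def less_SUP_iff)
  also have "open \<dots>"
    by (intro open_UN ballI open_Collect_less continuous_intros)
  finally show ?thesis .
qed

lemma exp_cross_term_pos:
  fixes x y \<theta>1 \<theta>2 :: real
  assumes "\<theta>1 < \<theta>2" and "x \<noteq> y"
  shows "0 < (x - y) * (exp (\<theta>2 * x + \<theta>1 * y) - exp (\<theta>1 * x + \<theta>2 * y))"
proof (cases "x < y")
  case True
  then have "\<theta>2 * x + \<theta>1 * y < \<theta>1 * x + \<theta>2 * y"
    using mult_strict_left_mono[of x y "\<theta>2 - \<theta>1"] assms by (simp add: algebra_simps)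
  then show ?thesis using True by (intro mult_neg_neg) auto
next
  case False
  then have "y < x" using assms(2) by simp
  then have "\<theta>1 * x + \<theta>2 * y < \<theta>2 * x + \<theta>1 * y"
    using mult_strict_left_mono[of y x "\<theta>2 - \<theta>1"] assms by (simp add: algebra_simps)
  then show ?thesis using \<open>y < x\<close> by (intro mult_pos_pos) auto
qed

lemma exp_cross_term_nonneg:
  fixes x y \<theta>1 \<theta>2 :: real
  assumes "\<theta>1 \<le> \<theta>2"
  shows "0 \<le> (x - y) * (exp (\<theta>2 * x + \<theta>1 * y) - exp (\<theta>1 * x + \<theta>2 * y))"
  using exp_cross_term_pos[of \<theta>1 \<theta>2 x y] assms by (cases "\<theta>1 = \<theta>2 \<or> x = y") auto

lemma tendsto_sum_exp_dominant:
  fixes c g :: "nat \<Rightarrow> real"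
  assumes "k0 < K" "c k0 = 0" "\<And>k. k < K \<Longrightarrow> k \<noteq> k0 \<Longrightarrow> c k < 0"
  shows "(\<lambda>n. \<Sum>k<K. g k * exp (real n * c k)) \<longlonglongrightarrow> g k0"
proof -
  have "(\<lambda>n. \<Sum>k<K. g k * exp (real n * c k)) \<longlonglongrightarrow> (\<Sum>k<K. if k = k0 then g k else 0)"
  proof (rule tendsto_sum)
    fix k assume k: "k \<in> {..<K}"
    show "(\<lambda>n. g k * exp (real n * c k)) \<longlonglongrightarrow> (if k = k0 then g k else 0)"
    proof (cases "k = k0")
      case True then show ?thesis using assms by simp
    next
      case False
      then have "(\<lambda>n. g k * exp (c k) ^ n) \<longlonglongrightarrow> g k * 0"
        using assms k by (intro tendsto_mult LIMSEQ_realpow_zero) auto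
      then show ?thesis using False by (simp add: exp_of_nat_mult)
    qed
  qed
  also have "(\<Sum>k<K. if k = k0 then g k else 0) = g k0" using assms by simp
  finally show ?thesis .
qed

locale exp_family =
  fixes K :: nat and a w :: "nat \<Rightarrow> real" and lo hi :: nat
  assumes weight_pos: "\<And>k. k < K \<Longrightarrow> 0 < w k"
    and weight_sum: "(\<Sum>k<K. w k) = 1"
    and lo_less: "lo < K" and hi_less: "hi < K" and lo_ne_hi: "lo \<noteq> hi"
    and a_lo_less: "\<And>k. k < K \<Longrightarrow> k \<noteq> lo \<Longrightarrow> a lo < a k"
    and a_less_hi: "\<And>k. k < K \<Longrightarrow> k \<noteq> hi \<Longrightarrow> a k < a hi"
begin

lemma a_lo_le: "k < K \<Longrightarrow> a lo \<le> a k"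
  using a_lo_less[of k] by (cases "k = lo") auto

lemma exp_family_reflect: "exp_family K (\<lambda>k. - a k) w hi lo"
  by unfold_locales (use weight_pos weight_sum lo_less hi_less lo_ne_hi a_lo_less a_less_hi in auto)

lemma mgf_pos: "0 < mgf K a w \<theta>"
  unfolding mgf_def using lo_less weight_pos by (intro sum_pos) auto

lemma mgf_zero: "mgf K a w 0 = 1"
  by (simp add: mgf_def weight_sum)

lemma cgf_zero: "cgf K a w 0 = 0"
  by (simp add: cgf_def mgf_zero)

lemma tilted_zero: "tilted K a w 0 k = w k"
  by (simp add: tilted_def mgf_zero)

lemma tilted_pos: "k < K \<Longrightarrow> 0 < tilted K a w \<theta> k"
  unfolding tilted_def using mgf_pos weight_pos by (intro divide_pos_pos) auto

lemma tilted_nonneg: "k < K \<Longrightarrow> 0 \<le> tilted K a w \<theta> k"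
  using tilted_pos[of k \<theta>] by linarith

lemma sum_tilted: "(\<Sum>k<K. tilted K a w \<theta> k) = 1"
  using mgf_pos[of \<theta>]
  by (simp add: tilted_def sum_divide_distrib[symmetric] mgf_def[symmetric])

lemma exp_family_tilted: "exp_family K a (tilted K a w \<theta>) lo hi"
  by unfold_locales
    (use tilted_pos sum_tilted lo_less hi_less lo_ne_hi a_lo_less a_less_hi in auto)

lemma tilted_tilted: "tilted K a (tilted K a w u) v k = tilted K a w (u + v) k"
proof -
  have Z: "mgf K a (tilted K a w u) v = mgf K a w (u + v) / mgf K a w u"
    unfolding mgf_def tilted_def
    by (simp add: sum_divide_distrib distrib_right exp_add mult.assoc)
  show ?thesis
    using mgf_pos[of u] mgf_pos[of "u + v"]
    unfolding tilted_def[of K a "tilted K a w u"] Z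
    by (simp add: tilted_def distrib_right exp_add field_simps)
qed

lemma a_lo_less_tilted_mean: "a lo < tilted_mean K a w \<theta>"
proof -
  have "0 < (\<Sum>k<K. tilted K a w \<theta> k * (a k - a lo))"
    using hi_less lo_ne_hi tilted_pos a_lo_le a_lo_less[of hi]
    by (intro sum_pos2[of _ hi]) (auto intro!: mult_nonneg_nonneg tilted_nonneg)
  also have "\<dots> = tilted_mean K a w \<theta> - a lo"
    by (simp add: tilted_mean_def right_diff_distrib sum_subtractf
        sum_distrib_right[symmetric] sum_tilted)
  finally show ?thesis by simp
qed

lemma tilted_mean_less_a_hi: "tilted_mean K a w \<theta> < a hi"
  using exp_family.a_lo_less_tilted_mean[OF exp_family_reflect, of "- \<theta>"]
  by (simp add: tilted_mean_reflect)

lemma continuous_on_tilted_mean: "continuous_on UNIV (tilted_mean K a w)"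
proof -
  have "continuous_on UNIV (\<lambda>\<theta>. \<Sum>k<K. w k * exp (\<theta> * a k) / mgf K a w \<theta> * a k)"
    using mgf_pos unfolding mgf_def
    by (intro continuous_intros) (auto simp: less_imp_neq[symmetric])
  then show ?thesis
    by (simp add: tilted_mean_def tilted_def[abs_def])
qed

lemma tilted_mean_diff:
  "2 * (tilted_mean K a w \<theta>2 - tilted_mean K a w \<theta>1) * mgf K a w \<theta>1 * mgf K a w \<theta>2
   = (\<Sum>j<K. \<Sum>k<K. w j * w k *
        ((a j - a k) * (exp (\<theta>2 * a j + \<theta>1 * a k) - exp (\<theta>1 * a j + \<theta>2 * a k))))"
proof -
  define N where "N \<theta> = (\<Sum>k<K. w k * a k * exp (\<theta> * a k))" for \<theta>
  define g where "g j k = w j * w k * a j *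
    (exp (\<theta>2 * a j) * exp (\<theta>1 * a k) - exp (\<theta>1 * a j) * exp (\<theta>2 * a k))" for j k
  have mean: "tilted_mean K a w \<theta> = N \<theta> / mgf K a w \<theta>" for \<theta>
    unfolding tilted_mean_def tilted_def N_def by (simp add: sum_divide_distrib algebra_simps)
  have "(tilted_mean K a w \<theta>2 - tilted_mean K a w \<theta>1) * mgf K a w \<theta>1 * mgf K a w \<theta>2
      = N \<theta>2 * mgf K a w \<theta>1 - N \<theta>1 * mgf K a w \<theta>2"
    using mgf_pos[of \<theta>1] mgf_pos[of \<theta>2] unfolding mean by (simp add: field_simps)
  also have "\<dots> = (\<Sum>j<K. \<Sum>k<K. g j k)"
    unfolding N_def mgf_def g_def sum_product sum_subtractf[symmetric]
    by (intro sum.cong refl) (simp add: algebra_simps)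
  finally have D: "(tilted_mean K a w \<theta>2 - tilted_mean K a w \<theta>1)
      * mgf K a w \<theta>1 * mgf K a w \<theta>2 = (\<Sum>j<K. \<Sum>k<K. g j k)" .
  have "(\<Sum>j<K. \<Sum>k<K. g j k) = (\<Sum>j<K. \<Sum>k<K. g k j)" by (rule sum.swap)
  then have "2 * (\<Sum>j<K. \<Sum>k<K. g j k) = (\<Sum>j<K. \<Sum>k<K. g j k + g k j)"
    by (simp add: sum.distrib)
  also have "\<dots> = (\<Sum>j<K. \<Sum>k<K. w j * w k *
        ((a j - a k) * (exp (\<theta>2 * a j + \<theta>1 * a k) - exp (\<theta>1 * a j + \<theta>2 * a k))))"
    unfolding g_def by (intro sum.cong refl) (simp add: exp_add algebra_simps)
  finally have S: "2 * (\<Sum>j<K. \<Sum>k<K. g j k) = \<dots>" .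
  show ?thesis using D S by (metis mult.assoc)
qed

lemma tilted_mean_strict_mono:
  assumes "\<theta>1 < \<theta>2"
  shows "tilted_mean K a w \<theta>1 < tilted_mean K a w \<theta>2"
proof -
  define c where "c j k = w j * w k *
    ((a j - a k) * (exp (\<theta>2 * a j + \<theta>1 * a k) - exp (\<theta>1 * a j + \<theta>2 * a k)))" for j k
  have nonneg: "0 \<le> c j k" if "j < K" "k < K" for j k
    unfolding c_def using that weight_pos assms
    by (intro mult_nonneg_nonneg exp_cross_term_nonneg) (auto intro: less_imp_le)
  have "0 < c hi lo"
    unfolding c_def using weight_pos[OF hi_less] weight_pos[OF lo_less] a_less_hi[OF lo_less]
      lo_ne_hi assms
    by (intro mult_pos_pos exp_cross_term_pos) auto
  then have "0 < (\<Sum>k<K. c hi k)"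
    using lo_less hi_less nonneg by (intro sum_pos2[of _ lo]) auto
  then have "0 < (\<Sum>j<K. \<Sum>k<K. c j k)"
    using hi_less nonneg
    by (intro sum_pos2[where f="\<lambda>j. \<Sum>k<K. c j k" and i=hi] sum_nonneg) auto
  then have "0 < 2 * (tilted_mean K a w \<theta>2 - tilted_mean K a w \<theta>1)
                 * mgf K a w \<theta>1 * mgf K a w \<theta>2"
    unfolding c_def tilted_mean_diff .
  then show ?thesis
    using mgf_pos[of \<theta>1] mgf_pos[of \<theta>2] by (simp add: zero_less_mult_iff)
qed

lemma tilted_mean_tendsto_a_hi: "(\<lambda>n. tilted_mean K a w (real n)) \<longlonglongrightarrow> a hi"
proof -
  have eq: "tilted_mean K a w (real n)
      = (\<Sum>k<K. (w k * a k) * exp (real n * (a k - a hi)))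
          / (\<Sum>k<K. w k * exp (real n * (a k - a hi)))" for n
  proof -
    have e: "exp (real n * (a k - a hi)) = exp (real n * a k) / exp (real n * a hi)" for k
      by (simp add: right_diff_distrib exp_diff)
    have "tilted_mean K a w (real n)
        = (\<Sum>k<K. (w k * a k) * exp (real n * a k)) / mgf K a w (real n)"
      unfolding tilted_mean_def tilted_def by (simp add: sum_divide_distrib algebra_simps)
    also have "\<dots> = ((\<Sum>k<K. (w k * a k) * exp (real n * a k)) / exp (real n * a hi))
          / (mgf K a w (real n) / exp (real n * a hi))"
      by simp
    finally show ?thesis unfolding e mgf_def by (simp add: sum_divide_distrib)
  qed
  have "(\<lambda>n. (\<Sum>k<K. (w k * a k) * exp (real n * (a k - a hi)))
          / (\<Sum>k<K. w k * exp (real n * (a k - a hi)))) \<longlonglongrightarrow> (w hi * a hi) / w hi"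
    using hi_less a_less_hi weight_pos[OF hi_less]
    by (intro tendsto_divide tendsto_sum_exp_dominant) auto
  then show ?thesis unfolding eq using weight_pos[OF hi_less] by simp
qed

lemma tilted_mean_tendsto_a_lo: "(\<lambda>n. tilted_mean K a w (- real n)) \<longlonglongrightarrow> a lo"
  using tendsto_minus[OF exp_family.tilted_mean_tendsto_a_hi[OF exp_family_reflect]]
  by (simp add: tilted_mean_reflect)

lemma tilted_mean_surj:
  assumes "a lo < t" "t < a hi"
  shows "\<exists>\<theta>. tilted_mean K a w \<theta> = t"
proof -
  obtain n1 where n1: "t < tilted_mean K a w (real n1)"
    using order_tendstoD(1)[OF tilted_mean_tendsto_a_hi assms(2)] by (auto dest: eventually_happens)
  obtain n2 where n2: "tilted_mean K a w (- real n2) < t"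
    using order_tendstoD(2)[OF tilted_mean_tendsto_a_lo assms(1)] by (auto dest: eventually_happens)
  have "\<exists>x. - real n2 \<le> x \<and> x \<le> real n1 \<and> tilted_mean K a w x = t"
    using n1 n2 by (intro IVT' continuous_on_subset[OF continuous_on_tilted_mean]) auto
  then show ?thesis by blast
qed

lemma bij_tilted_mean: "bij_betw (tilted_mean K a w) UNIV {a lo<..<a hi}"
proof (rule bij_betw_imageI)
  show "inj (tilted_mean K a w)"
    by (rule strict_mono_imp_inj_on) (auto intro: strict_monoI tilted_mean_strict_mono)
  show "range (tilted_mean K a w) = {a lo<..<a hi}"
    using tilted_mean_surj a_lo_less_tilted_mean tilted_mean_less_a_hi by fastforce
qed


text \<open>The tangent bound \<open>1 + x \<le> exp x\<close>, averaged under the tilt with mean \<open>t\<close>, shows that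
  this tilt attains the supremum defining the Legendre transform at \<open>t\<close>.\<close>

lemma legendre_objective_le:
  assumes "tilted_mean K a w \<theta> = t"
  shows "\<theta>' * t - cgf K a w \<theta>' \<le> \<theta> * t - cgf K a w \<theta>"
proof -
  define c where "c = \<theta>' - \<theta>"
  have "exp (c * t) = (\<Sum>k<K. tilted K a w \<theta> k * (exp (c * t) * (1 + c * (a k - t))))"
  proof -
    have "(\<Sum>k<K. tilted K a w \<theta> k * (exp (c * t) * (1 + c * (a k - t))))
        = exp (c * t) * ((\<Sum>k<K. tilted K a w \<theta> k) + c * (\<Sum>k<K. tilted K a w \<theta> k * a k)
            - c * t * (\<Sum>k<K. tilted K a w \<theta> k))"
      by (simp add: sum_distrib_left sum.distrib sum_subtractf algebra_simps)
    also have "\<dots> = exp (c * t)"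
      using assms by (simp add: sum_tilted tilted_mean_def[symmetric])
    finally show ?thesis by simp
  qed
  also have "\<dots> \<le> (\<Sum>k<K. tilted K a w \<theta> k * exp (c * a k))"
  proof (intro sum_mono mult_left_mono)
    fix k assume "k \<in> {..<K}"
    then show "0 \<le> tilted K a w \<theta> k" by (simp add: tilted_nonneg)
    have "exp (c * t) * (1 + c * (a k - t)) \<le> exp (c * t) * exp (c * (a k - t))"
      by (intro mult_left_mono) auto
    also have "\<dots> = exp (c * a k)" by (simp add: exp_add[symmetric] algebra_simps)
    finally show "exp (c * t) * (1 + c * (a k - t)) \<le> exp (c * a k)" .
  qed
  also have "\<dots> = mgf K a w \<theta>' / mgf K a w \<theta>"
    unfolding tilted_def mgf_def c_def
    by (simp add: sum_divide_distrib left_diff_distrib exp_diff mult.assoc)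
  finally have "c * t \<le> ln (mgf K a w \<theta>' / mgf K a w \<theta>)"
    using mgf_pos by (simp add: ln_ge_iff)
  then show ?thesis
    using mgf_pos[of \<theta>] mgf_pos[of \<theta>']
    by (simp add: cgf_def ln_div c_def algebra_simps)
qed

lemma cramer_rate_tilted_mean:
  "cramer_rate K a w (tilted_mean K a w \<theta>)
     = ereal (\<theta> * tilted_mean K a w \<theta> - cgf K a w \<theta>)"
  unfolding cramer_rate_def
  by (intro antisym SUP_least SUP_upper2[of \<theta>]) (use legendre_objective_le in auto)

lemma KL_tilted:
  "KL K (tilted K a w \<theta>) w = \<theta> * tilted_mean K a w \<theta> - cgf K a w \<theta>"
proof -
  have "ln (tilted K a w \<theta> k / w k) = \<theta> * a k - cgf K a w \<theta>" if "k < K" for k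
    using weight_pos[OF that] mgf_pos[of \<theta>]
    by (simp add: tilted_def ln_div cgf_def)
  then have "KL K (tilted K a w \<theta>) w
      = (\<Sum>k<K. tilted K a w \<theta> k * (\<theta> * a k - cgf K a w \<theta>))"
    unfolding KL_def by (intro sum.cong) auto
  also have "\<dots> = \<theta> * tilted_mean K a w \<theta> - cgf K a w \<theta>"
    by (simp add: right_diff_distrib sum_subtractf sum_distrib_left[symmetric]
        sum_distrib_right[symmetric] sum_tilted tilted_mean_def algebra_simps)
  finally show ?thesis .
qed

lemma cramer_rate_eq_KL:
  "cramer_rate K a w (tilted_mean K a w \<theta>) = ereal (KL K (tilted K a w \<theta>) w)"
  by (simp add: cramer_rate_tilted_mean KL_tilted)

lemma cramer_rate_nonneg: "0 \<le> cramer_rate K a w t"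
  unfolding cramer_rate_def by (intro SUP_upper2[of 0]) (auto simp: cgf_zero)

lemma cramer_rate_a_lo: "cramer_rate K a w (a lo) = ereal (- ln (w lo))"
proof (rule antisym)
  have "\<theta> * a lo - cgf K a w \<theta> \<le> - ln (w lo)" for \<theta>
  proof -
    have "w lo * exp (\<theta> * a lo) \<le> mgf K a w \<theta>"
      unfolding mgf_def using lo_less weight_pos by (intro member_le_sum) (auto intro: less_imp_le)
    then have "ln (w lo * exp (\<theta> * a lo)) \<le> cgf K a w \<theta>"
      unfolding cgf_def using weight_pos[OF lo_less] mgf_pos by simp
    then show ?thesis using weight_pos[OF lo_less] by (simp add: ln_mult)
  qed
  then show "cramer_rate K a w (a lo) \<le> ereal (- ln (w lo))"
    unfolding cramer_rate_def by (intro SUP_least) auto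
  have eq: "- real n * a lo - cgf K a w (- real n)
      = - ln (\<Sum>k<K. w k * exp (real n * (a lo - a k)))" for n
  proof -
    have "mgf K a w (- real n)
        = (\<Sum>k<K. w k * exp (real n * (a lo - a k))) * exp (- real n * a lo)"
      unfolding mgf_def sum_distrib_right
      by (intro sum.cong refl) (simp add: exp_add[symmetric] algebra_simps)
    moreover have "0 < (\<Sum>k<K. w k * exp (real n * (a lo - a k)))"
      using lo_less weight_pos by (intro sum_pos) auto
    ultimately show ?thesis unfolding cgf_def by (simp add: ln_mult)
  qed
  have "(\<lambda>n. \<Sum>k<K. w k * exp (real n * (a lo - a k))) \<longlonglongrightarrow> w lo"
    using lo_less a_lo_less by (intro tendsto_sum_exp_dominant) auto
  then have "(\<lambda>n. ereal (- real n * a lo - cgf K a w (- real n))) \<longlonglongrightarrow> ereal (- ln (w lo))"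
    unfolding eq using weight_pos[OF lo_less] by (intro tendsto_ereal tendsto_intros) auto
  then show "ereal (- ln (w lo)) \<le> cramer_rate K a w (a lo)"
    by (rule tendsto_upperbound)
      (auto simp: cramer_rate_def intro!: always_eventually SUP_upper2[where i="- real _"])
qed

lemma cramer_rate_below:
  assumes "t < a lo"
  shows "cramer_rate K a w t = \<infinity>"
  unfolding cramer_rate_def
proof (rule SUP_PInfty)
  fix n :: nat
  define \<theta> where "\<theta> = - real n / (a lo - t)"
  have \<theta>: "\<theta> \<le> 0" using assms by (simp add: \<theta>_def divide_nonneg_pos)
  have "mgf K a w \<theta> \<le> (\<Sum>k<K. w k * exp (\<theta> * a lo))"
    unfolding mgf_def
    using \<theta> a_lo_le weight_pos by (intro sum_mono mult_left_mono) (auto intro: mult_left_mono_neg less_imp_le)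
  also have "\<dots> = exp (\<theta> * a lo)" by (simp add: sum_distrib_right[symmetric] weight_sum)
  finally have "cgf K a w \<theta> \<le> \<theta> * a lo"
    unfolding cgf_def using mgf_pos[of \<theta>] by (metis exp_gt_zero ln_exp ln_le_cancel_iff)
  moreover have "\<theta> * (t - a lo) = real n" using assms by (simp add: \<theta>_def field_simps)
  ultimately show "\<exists>\<theta>\<in>UNIV. ereal (real n) \<le> ereal (\<theta> * t - cgf K a w \<theta>)"
    by (intro bexI[of _ \<theta>]) (auto simp: algebra_simps)
qed

lemma cramer_rate_a_hi: "cramer_rate K a w (a hi) = ereal (- ln (w hi))"
  using exp_family.cramer_rate_a_lo[OF exp_family_reflect] cramer_rate_reflect[of K a w "a hi"]
  by simp

lemma cramer_rate_above: "a hi < t \<Longrightarrow> cramer_rate K a w t = \<infinity>"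
  using exp_family.cramer_rate_below[OF exp_family_reflect, of "- t"] cramer_rate_reflect[of K a w t]
  by simp

lemma compact_cramer_rate_sublevel: "compact {t. cramer_rate K a w t \<le> ereal c}"
proof (rule compact_eq_bounded_closed[THEN iffD2, OF conjI])
  have "{t. cramer_rate K a w t \<le> ereal c} \<subseteq> {a lo..a hi}"
    using cramer_rate_below cramer_rate_above by (force simp: not_less[symmetric])
  then show "bounded {t. cramer_rate K a w t \<le> ereal c}"
    by (rule bounded_subset[OF bounded_closed_interval])
  have "{t. cramer_rate K a w t \<le> ereal c} = - {t. ereal c < cramer_rate K a w t}" by auto
  then show "closed {t. cramer_rate K a w t \<le> ereal c}"
    using open_cramer_rate_superlevel by (simp add: closed_def)
qed

end

lemma finite_words: "finite (PiE {..<m::nat} (\<lambda>_. {..<K::nat}))"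
  by (intro finite_PiE) auto

lemma log_rate_le:
  assumes "0 < n" "P \<le> exp (real n * y)"
  shows "log_rate n P \<le> ereal y"
proof (cases "P \<le> 0")
  case True
  then show ?thesis using assms by (simp add: elog_def)
next
  case False
  then have "ln P \<le> real n * y" using assms by (metis exp_gt_zero ln_exp ln_le_cancel_iff not_le)
  then have "ln P / real n \<le> y" using assms by (simp add: divide_simps mult.commute)
  then show ?thesis using False by (simp add: elog_def)
qed

lemma log_rate_ge:
  assumes "0 < n" "exp (real n * y) \<le> P"
  shows "ereal y \<le> log_rate n P"
proof -
  have P: "0 < P" using exp_gt_zero assms(2) by (rule less_le_trans)
  then have "real n * y \<le> ln P" using assms by (metis ln_exp ln_le_cancel_iff exp_gt_zero)
  then have "y \<le> ln P / real n" using assms by (simp add: divide_simps mult.commute)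
  then show ?thesis using P by (simp add: elog_def)
qed

lemma log_rate_mono: "P \<le> Q \<Longrightarrow> log_rate n P \<le> log_rate n Q"
  by (intro ereal_mult_left_mono) (auto simp: elog_def)

lemma ereal_le_uminus_from_reals:
  fixes l c :: ereal
  assumes "\<And>x. ereal x < c \<Longrightarrow> l \<le> - ereal x"
  shows "l \<le> - c"
proof -
  have "c \<le> - l"
  proof (rule dense_le)
    fix z assume z: "z < c"
    show "z \<le> - l"
    proof (cases z)
      case (real x)
      then show ?thesis using assms z by (metis ereal_minus_le_minus ereal_uminus_uminus)
    qed (use z in auto)
  qed
  then show ?thesis by (metis ereal_minus_le_minus ereal_uminus_uminus)
qed

lemma open_contains_small_interval:
  fixes t c :: real
  assumes "open G" "t \<in> G" "0 < c"
  obtains \<epsilon> where "0 < \<epsilon>" "\<epsilon> < c" "{t-\<epsilon><..<t+\<epsilon>} \<subseteq> G"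
proof -
  obtain e where e: "0 < e" "ball t e \<subseteq> G" using assms(1,2) by (auto simp: open_contains_ball)
  define \<epsilon> where "\<epsilon> = min e (c / 2)"
  have "ball t \<epsilon> \<subseteq> G" using subset_ball[of \<epsilon> e t] e(2) by (auto simp: \<epsilon>_def)
  then show ?thesis
    using e(1) assms(3) by (intro that[of \<epsilon>]) (auto simp: \<epsilon>_def ball_eq_greaterThanLessThan)
qed

lemma tendsto_ln2_div: "(\<lambda>n. ln 2 / real n) \<longlonglongrightarrow> 0"
proof -
  have "(\<lambda>n. ln 2 * inverse (real n)) \<longlonglongrightarrow> ln 2 * 0"
    by (intro tendsto_intros lim_inverse_n)
  then show ?thesis by (simp add: divide_inverse)
qed

lemma tendsto_exp_neg_linear: "0 < c \<Longrightarrow> (\<lambda>n. exp (- real n * c)) \<longlonglongrightarrow> 0"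
  using LIMSEQ_realpow_zero[of "exp (- c)"] by (simp add: exp_of_nat_mult[symmetric] mult.commute)

context exp_family
begin

lemma prod_weight_nonneg: "y \<in> PiE {..<m} (\<lambda>_. {..<K}) \<Longrightarrow> 0 \<le> (\<Prod>i<m. w (y i))"
  by (intro prod_nonneg) (auto simp: PiE_iff intro: less_imp_le weight_pos)

lemma sum_prod_weight: "(\<Sum>y\<in>PiE {..<m::nat} (\<lambda>_. {..<K}). \<Prod>i<m. w (y i)) = 1"
  using prod_sum_PiE[of "{..<m}" "\<lambda>_. {..<K}" "\<lambda>i k. w k"] by (simp add: weight_sum)

lemma empirical_mean_prob_mono:
  "S \<subseteq> T \<Longrightarrow> empirical_mean_prob K a w m S \<le> empirical_mean_prob K a w m T"
  unfolding empirical_mean_prob_def using prod_weight_nonneg by (intro sum_mono) auto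

lemma empirical_mean_prob_Un:
  "empirical_mean_prob K a w m (S \<union> T) \<le> empirical_mean_prob K a w m S + empirical_mean_prob K a w m T"
  unfolding empirical_mean_prob_def sum.distrib[symmetric]
  using prod_weight_nonneg by (intro sum_mono) auto

lemma empirical_mean_prob_Compl:
  "empirical_mean_prob K a w m (- S) = 1 - empirical_mean_prob K a w m S"
proof -
  have "empirical_mean_prob K a w m (- S) + empirical_mean_prob K a w m S = 1"
    unfolding empirical_mean_prob_def sum.distrib[symmetric]
    by (subst sum_prod_weight[symmetric, of m]) (intro sum.cong, auto)
  then show ?thesis by simp
qed

lemma empirical_mean_prob_le_1: "empirical_mean_prob K a w m S \<le> 1"
  using empirical_mean_prob_Compl[of m S] empirical_mean_prob_mono[of "{}" "- S" m]
  by (simp add: empirical_mean_prob_def)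

lemma power_weight_le_empirical_mean_prob:
  assumes "k < K" "a k \<in> S" "0 < m"
  shows "w k ^ m \<le> empirical_mean_prob K a w m S"
proof -
  define y where "y = restrict (\<lambda>_. k) {..<m}"
  have y: "y \<in> PiE {..<m} (\<lambda>_. {..<K})" using assms by (simp add: y_def)
  have "w k ^ m = (if (\<Sum>i<m. a (y i)) / real m \<in> S then \<Prod>i<m. w (y i) else 0)"
    using assms by (simp add: y_def)
  also have "\<dots> \<le> empirical_mean_prob K a w m S"
    unfolding empirical_mean_prob_def using y prod_weight_nonneg
    by (intro member_le_sum[OF y]) (auto intro: finite_words)
  finally show ?thesis .
qed

lemma chernoff_bound:
  assumes "0 < m"
    and "\<And>y. y \<in> PiE {..<m} (\<lambda>_. {..<K}) \<Longrightarrow> (\<Sum>i<m. a (y i)) / real m \<in> S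
           \<Longrightarrow> 0 \<le> \<theta> * ((\<Sum>i<m. a (y i)) / real m - s)"
  shows "empirical_mean_prob K a w m S \<le> exp (- real m * (\<theta> * s - cgf K a w \<theta>))"
proof -
  have "empirical_mean_prob K a w m S
      \<le> (\<Sum>y\<in>PiE {..<m} (\<lambda>_. {..<K}). \<Prod>i<m. w (y i) * exp (\<theta> * (a (y i) - s)))"
    unfolding empirical_mean_prob_def
  proof (intro sum_mono)
    fix y assume y: "y \<in> PiE {..<m} (\<lambda>_. {..<K})"
    let ?s = "\<Sum>i<m. a (y i)"
    have eq: "(\<Prod>i<m. w (y i) * exp (\<theta> * (a (y i) - s)))
        = (\<Prod>i<m. w (y i)) * exp (\<theta> * ?s - real m * \<theta> * s)"
      by (simp add: prod.distrib exp_sum[symmetric] sum_distrib_left right_diff_distrib sum_subtractf)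
    show "(if ?s / real m \<in> S then \<Prod>i<m. w (y i) else 0)
        \<le> (\<Prod>i<m. w (y i) * exp (\<theta> * (a (y i) - s)))"
    proof (cases "?s / real m \<in> S")
      case True
      then have "0 \<le> real m * (\<theta> * (?s / real m - s))" using assms(2)[OF y] by simp
      also have "real m * (\<theta> * (?s / real m - s)) = \<theta> * ?s - real m * \<theta> * s"
        using assms(1) by (simp add: field_simps)
      finally have "1 \<le> exp (\<theta> * ?s - real m * \<theta> * s)" by simp
      then show ?thesis using True prod_weight_nonneg[OF y] unfolding eq
        by (simp add: mult_le_cancel_left1)
    next
      case False
      then show ?thesis using prod_weight_nonneg[OF y] unfolding eq by simp
    qed
  qed
  also have "\<dots> = (\<Prod>i<m. \<Sum>k<K. w k * exp (\<theta> * (a k - s)))"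
    by (rule prod_sum_PiE[symmetric]) auto
  also have "\<dots> = (mgf K a w \<theta> * exp (- \<theta> * s)) ^ m"
    unfolding mgf_def sum_distrib_right by (simp add: exp_add[symmetric] algebra_simps)
  also have "\<dots> = exp (- real m * (\<theta> * s - cgf K a w \<theta>))"
  proof -
    have "mgf K a w \<theta> ^ m = exp (real m * cgf K a w \<theta>)"
      using mgf_pos[of \<theta>] by (simp add: cgf_def exp_of_nat_mult)
    then show ?thesis
      by (simp add: power_mult_distrib exp_of_nat_mult[symmetric] exp_add[symmetric] algebra_simps)
  qed
  finally show ?thesis .
qed

lemma prod_weight_change_of_measure:
  assumes "y \<in> PiE {..<m} (\<lambda>_. {..<K})"
  shows "(\<Prod>i<m. w (y i))
    = (\<Prod>i<m. tilted K a w \<theta> (y i)) * exp (real m * cgf K a w \<theta> - \<theta> * (\<Sum>i<m. a (y i)))"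
proof -
  have "w k = tilted K a w \<theta> k * (exp (cgf K a w \<theta>) * exp (- \<theta> * a k))" for k
    using mgf_pos[of \<theta>] by (simp add: tilted_def cgf_def exp_minus field_simps)
  then have "(\<Prod>i<m. w (y i))
      = (\<Prod>i<m. tilted K a w \<theta> (y i)) * (exp (cgf K a w \<theta>) ^ m * exp (\<Sum>i<m. - \<theta> * a (y i)))"
    by (simp add: prod.distrib exp_sum)
  also have "exp (cgf K a w \<theta>) ^ m * exp (\<Sum>i<m. - \<theta> * a (y i))
      = exp (real m * cgf K a w \<theta> - \<theta> * (\<Sum>i<m. a (y i)))"
    by (simp add: exp_of_nat_mult[symmetric] exp_add[symmetric] sum_distrib_left sum_negf)
  finally show ?thesis .
qed

lemma chernoff_bound_right_of_mean:
  assumes F: "closed F" and m: "0 < m" and x: "ereal x < (INF t\<in>F. cramer_rate K a w t)"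
  shows "empirical_mean_prob K a w m (F \<inter> {tilted_mean K a w 0..}) \<le> exp (- real m * x)"
proof (cases "F \<inter> {tilted_mean K a w 0..} = {}")
  case True
  then show ?thesis by (simp add: empirical_mean_prob_def)
next
  case False
  define s where "s = Inf (F \<inter> {tilted_mean K a w 0..})"
  have bdd: "bdd_below (F \<inter> {tilted_mean K a w 0..})"
    by (rule bdd_belowI[of _ "tilted_mean K a w 0"]) auto
  have s: "s \<in> F \<inter> {tilted_mean K a w 0..}"
    unfolding s_def using False bdd F by (intro closed_contains_Inf closed_Int) auto
  then have "ereal x < cramer_rate K a w s" using x by (auto dest: INF_lower order.strict_trans2)
  then obtain \<theta> where \<theta>: "x < \<theta> * s - cgf K a w \<theta>"
    by (auto simp: cramer_rate_def less_SUP_iff)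
  show ?thesis
  proof (cases "0 \<le> \<theta>")
    case True
    have "empirical_mean_prob K a w m (F \<inter> {tilted_mean K a w 0..})
        \<le> exp (- real m * (\<theta> * s - cgf K a w \<theta>))"
    proof (rule chernoff_bound[OF m])
      fix y assume "(\<Sum>i<m. a (y i)) / real m \<in> F \<inter> {tilted_mean K a w 0..}"
      then have "s \<le> (\<Sum>i<m. a (y i)) / real m" unfolding s_def using bdd by (intro cInf_lower)
      then show "0 \<le> \<theta> * ((\<Sum>i<m. a (y i)) / real m - s)" using True by simp
    qed
    also have "\<dots> \<le> exp (- real m * x)" using \<theta> m by simp
    finally show ?thesis .
  next
    case False
    \<comment> \<open>a negative exponent cannot beat \<open>\<theta> = 0\<close> to the right of the mean\<close>
    have "\<theta> * tilted_mean K a w 0 - cgf K a w \<theta> \<le> 0 * tilted_mean K a w 0 - cgf K a w 0"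
      by (rule legendre_objective_le) simp
    moreover have "\<theta> * s \<le> \<theta> * tilted_mean K a w 0" using False s by (intro mult_left_mono_neg) auto
    ultimately have "0 \<le> - real m * x" using \<theta> m by (simp add: cgf_zero mult_nonneg_nonpos)
    then have "1 \<le> exp (- real m * x)" by simp
    with empirical_mean_prob_le_1 show ?thesis by (rule order.trans)
  qed
qed

lemma cramer_upper_bound:
  assumes F: "closed F"
  shows "limsup (\<lambda>n. log_rate n (empirical_mean_prob K a w n F)) \<le> - (INF t\<in>F. cramer_rate K a w t)"
proof (rule ereal_le_uminus_from_reals)
  fix x assume x: "ereal x < (INF t\<in>F. cramer_rate K a w t)"
  interpret r: exp_family K "\<lambda>k. - a k" w hi lo by (rule exp_family_reflect)
  have "log_rate n (empirical_mean_prob K a w n F) \<le> ereal (ln 2 / real n - x)" if n: "0 < n" for n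
  proof (rule log_rate_le[OF n])
    let ?P = "empirical_mean_prob K a w n"
    have "?P (F \<inter> {..tilted_mean K a w 0})
        = empirical_mean_prob K (\<lambda>k. - a k) w n (uminus ` F \<inter> {tilted_mean K (\<lambda>k. - a k) w 0..})"
      unfolding empirical_mean_prob_reflect[symmetric, of _ _ _ _ "F \<inter> {..tilted_mean K a w 0}"]
      by (intro arg_cong[where f="empirical_mean_prob K (\<lambda>k. - a k) w n"])
        (auto simp: tilted_mean_reflect image_iff intro: bexI[of _ "- _"])
    also have "\<dots> \<le> exp (- real n * x)"
      using x by (intro r.chernoff_bound_right_of_mean closed_negations F n)
        (simp add: image_image cramer_rate_reflect)
    finally have "?P (F \<inter> {..tilted_mean K a w 0}) \<le> exp (- real n * x)" .
    moreover have "?P (F \<inter> {tilted_mean K a w 0..}) \<le> exp (- real n * x)"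
      by (rule chernoff_bound_right_of_mean[OF F n x])
    moreover have "?P F \<le> ?P (F \<inter> {tilted_mean K a w 0..}) + ?P (F \<inter> {..tilted_mean K a w 0})"
      by (rule order.trans[OF empirical_mean_prob_mono empirical_mean_prob_Un]) auto
    moreover have "exp (real n * (ln 2 / real n - x)) = 2 * exp (- real n * x)"
    proof -
      have "real n * (ln 2 / real n - x) = ln 2 + - real n * x" using n by (simp add: field_simps)
      then show ?thesis by (simp only: exp_add) simp
    qed
    ultimately show "?P F \<le> exp (real n * (ln 2 / real n - x))" by simp
  qed
  then have "limsup (\<lambda>n. log_rate n (empirical_mean_prob K a w n F))
      \<le> limsup (\<lambda>n. ereal (ln 2 / real n - x))"
    by (intro Limsup_mono eventually_sequentiallyI[of 1]) auto
  also have "\<dots> = ereal (- x)"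
  proof (rule lim_imp_Limsup)
    show "(\<lambda>n. ereal (ln 2 / real n - x)) \<longlonglongrightarrow> ereal (- x)"
      using tendsto_diff[OF tendsto_ln2_div tendsto_const[of x]] by (intro tendsto_ereal) simp
  qed simp
  finally show "limsup (\<lambda>n. log_rate n (empirical_mean_prob K a w n F)) \<le> - ereal x" by simp
qed


lemma has_derivative_cgf_at_0:
  "((\<lambda>\<theta>. cgf K a w \<theta> - \<theta> * s) has_real_derivative (tilted_mean K a w 0 - s)) (at 0)"
proof -
  have "((\<lambda>\<theta>. ln (\<Sum>k<K. w k * exp (\<theta> * a k)) - \<theta> * s) has_real_derivative
      ((\<Sum>k<K. w k * (exp (0 * a k) * a k)) / (\<Sum>k<K. w k * exp (0 * a k)) - s)) (at 0)"
    using mgf_pos[of 0] unfolding mgf_def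
    by (auto intro!: derivative_eq_intros sum.cong simp: mult.commute)
  moreover have "tilted_mean K a w 0
      = (\<Sum>k<K. w k * (exp (0 * a k) * a k)) / (\<Sum>k<K. w k * exp (0 * a k))"
    by (simp add: tilted_mean_def tilted_zero weight_sum)
  ultimately show ?thesis unfolding cgf_def mgf_def by simp
qed

lemma exists_pos_rate_above_mean:
  assumes "tilted_mean K a w 0 < s"
  shows "\<exists>\<theta>>0. 0 < \<theta> * s - cgf K a w \<theta>"
proof -
  obtain d where d: "0 < d"
    "\<And>h. 0 < h \<Longrightarrow> h < d \<Longrightarrow> cgf K a w (0 + h) - (0 + h) * s < cgf K a w 0 - 0 * s"
    using DERIV_neg_dec_right[OF has_derivative_cgf_at_0, of s] assms by auto
  then show ?thesis using d(2)[of "d / 2"] by (intro exI[of _ "d / 2"]) (auto simp: cgf_zero)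
qed

lemma exists_pos_rate_below_mean:
  assumes "s < tilted_mean K a w 0"
  shows "\<exists>\<theta><0. 0 < \<theta> * s - cgf K a w \<theta>"
proof -
  have "tilted_mean K (\<lambda>k. - a k) w 0 < - s" using assms by (simp add: tilted_mean_reflect)
  then obtain \<theta> where "\<theta> > 0" "0 < \<theta> * (- s) - cgf K (\<lambda>k. - a k) w \<theta>"
    using exp_family.exists_pos_rate_above_mean[OF exp_family_reflect] by blast
  then show ?thesis by (intro exI[of _ "- \<theta>"]) (simp add: cgf_reflect)
qed

lemma eventually_prob_near_mean:
  assumes "0 < \<epsilon>"
  shows "eventually (\<lambda>n. 1/2 \<le> empirical_mean_prob K a w n
           {tilted_mean K a w 0 - \<epsilon><..<tilted_mean K a w 0 + \<epsilon>}) sequentially"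
proof -
  let ?\<mu> = "tilted_mean K a w 0"
  obtain \<theta>1 where \<theta>1: "\<theta>1 > 0" "0 < \<theta>1 * (?\<mu> + \<epsilon>) - cgf K a w \<theta>1"
    using exists_pos_rate_above_mean[of "?\<mu> + \<epsilon>"] assms by auto
  obtain \<theta>2 where \<theta>2: "\<theta>2 < 0" "0 < \<theta>2 * (?\<mu> - \<epsilon>) - cgf K a w \<theta>2"
    using exists_pos_rate_below_mean[of "?\<mu> - \<epsilon>"] assms by auto
  define c1 where "c1 = \<theta>1 * (?\<mu> + \<epsilon>) - cgf K a w \<theta>1"
  define c2 where "c2 = \<theta>2 * (?\<mu> - \<epsilon>) - cgf K a w \<theta>2"
  have "eventually (\<lambda>n. exp (- real n * c1) < 1/4) sequentially"
    using \<theta>1(2) unfolding c1_def[symmetric] by (intro order_tendstoD(2)[OF tendsto_exp_neg_linear]) auto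
  moreover have "eventually (\<lambda>n. exp (- real n * c2) < 1/4) sequentially"
    using \<theta>2(2) unfolding c2_def[symmetric] by (intro order_tendstoD(2)[OF tendsto_exp_neg_linear]) auto
  ultimately show ?thesis
    using eventually_gt_at_top[of 0]
  proof eventually_elim
    case (elim n)
    let ?P = "empirical_mean_prob K a w n"
    have "?P {?\<mu>+\<epsilon>..} \<le> exp (- real n * c1)"
      unfolding c1_def
    proof (rule chernoff_bound)
      fix y assume "(\<Sum>i<n. a (y i)) / real n \<in> {?\<mu>+\<epsilon>..}"
      then show "0 \<le> \<theta>1 * ((\<Sum>i<n. a (y i)) / real n - (?\<mu> + \<epsilon>))"
        using \<theta>1(1) by (intro mult_nonneg_nonneg) auto
    qed (use elim in simp)
    moreover have "?P {..?\<mu>-\<epsilon>} \<le> exp (- real n * c2)"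
      unfolding c2_def
    proof (rule chernoff_bound)
      fix y assume "(\<Sum>i<n. a (y i)) / real n \<in> {..?\<mu>-\<epsilon>}"
      then show "0 \<le> \<theta>2 * ((\<Sum>i<n. a (y i)) / real n - (?\<mu> - \<epsilon>))"
        using \<theta>2(1) by (intro mult_nonpos_nonpos) auto
    qed (use elim in simp)
    moreover have "?P (- {?\<mu>-\<epsilon><..<?\<mu>+\<epsilon>}) \<le> ?P {?\<mu>+\<epsilon>..} + ?P {..?\<mu>-\<epsilon>}"
      by (rule order.trans[OF empirical_mean_prob_mono empirical_mean_prob_Un]) auto
    ultimately show ?case
      using elim empirical_mean_prob_Compl[of n "{?\<mu>-\<epsilon><..<?\<mu>+\<epsilon>}"] by linarith
  qed
qed

lemma empirical_mean_prob_tilted_le: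
  assumes n: "0 < n"
  shows "exp (- real n * (\<theta> * t - cgf K a w \<theta> + \<bar>\<theta>\<bar> * \<epsilon>))
           * empirical_mean_prob K a (tilted K a w \<theta>) n {t-\<epsilon><..<t+\<epsilon>}
         \<le> empirical_mean_prob K a w n {t-\<epsilon><..<t+\<epsilon>}"
  unfolding empirical_mean_prob_def sum_distrib_left
proof (intro sum_mono)
  fix y assume y: "y \<in> PiE {..<n} (\<lambda>_. {..<K})"
  interpret v: exp_family K a "tilted K a w \<theta>" lo hi by (rule exp_family_tilted)
  define z where "z = (\<Sum>i<n. a (y i)) / real n"
  have sum_eq: "(\<Sum>i<n. a (y i)) = real n * z" unfolding z_def using n by simp
  show "exp (- real n * (\<theta> * t - cgf K a w \<theta> + \<bar>\<theta>\<bar> * \<epsilon>)) *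
         (if (\<Sum>i<n. a (y i)) / real n \<in> {t - \<epsilon><..<t + \<epsilon>} then \<Prod>i<n. tilted K a w \<theta> (y i) else 0)
       \<le> (if (\<Sum>i<n. a (y i)) / real n \<in> {t - \<epsilon><..<t + \<epsilon>} then \<Prod>i<n. w (y i) else 0)"
  proof (cases "z \<in> {t - \<epsilon><..<t + \<epsilon>}")
    case True
    have "\<bar>z - t\<bar> \<le> \<epsilon>" using True by (simp add: abs_le_iff)
    then have "\<bar>\<theta> * (z - t)\<bar> \<le> \<bar>\<theta>\<bar> * \<epsilon>" unfolding abs_mult by (rule mult_left_mono) simp
    then have "\<theta> * (z - t) \<le> \<bar>\<theta>\<bar> * \<epsilon>" using abs_ge_self[of "\<theta> * (z - t)"] by linarith
    then have "real n * (\<theta> * (z - t)) \<le> real n * (\<bar>\<theta>\<bar> * \<epsilon>)" by (intro mult_left_mono) auto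
    then have "exp (- real n * (\<theta> * t - cgf K a w \<theta> + \<bar>\<theta>\<bar> * \<epsilon>))
        \<le> exp (real n * cgf K a w \<theta> - \<theta> * (\<Sum>i<n. a (y i)))"
      unfolding sum_eq by (simp add: algebra_simps)
    from mult_left_mono[OF this v.prod_weight_nonneg[OF y]]
    have "exp (- real n * (\<theta> * t - cgf K a w \<theta> + \<bar>\<theta>\<bar> * \<epsilon>)) * (\<Prod>i<n. tilted K a w \<theta> (y i))
        \<le> (\<Prod>i<n. tilted K a w \<theta> (y i)) * exp (real n * cgf K a w \<theta> - \<theta> * (\<Sum>i<n. a (y i)))"
      by (simp add: mult.commute)
    also have "\<dots> = (\<Prod>i<n. w (y i))" by (rule prod_weight_change_of_measure[OF y, symmetric])
    finally show ?thesis using True unfolding z_def by simp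
  next
    case False
    then have "(\<Sum>i<n. a (y i)) / real n \<notin> {t - \<epsilon><..<t + \<epsilon>}" unfolding z_def .
    then show ?thesis by (simp del: greaterThanLessThan_iff)
  qed
qed


lemma cramer_lower_bound_at_tilted_mean:
  assumes G: "open G" "t \<in> G" and \<theta>: "tilted_mean K a w \<theta> = t"
    and x: "\<theta> * t - cgf K a w \<theta> < x"
  shows "ereal (- x) \<le> liminf (\<lambda>n. log_rate n (empirical_mean_prob K a w n G))"
proof -
  define J where "J = \<theta> * t - cgf K a w \<theta>"
  have "0 < (x - J) / (\<bar>\<theta>\<bar> + 1)" using x by (simp add: J_def)
  then obtain \<epsilon> where \<epsilon>: "0 < \<epsilon>" "\<epsilon> < (x - J) / (\<bar>\<theta>\<bar> + 1)"
    and interval: "{t-\<epsilon><..<t+\<epsilon>} \<subseteq> G"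
    by (rule open_contains_small_interval[OF G])
  have "\<bar>\<theta>\<bar> * \<epsilon> \<le> (\<bar>\<theta>\<bar> + 1) * \<epsilon>" using \<epsilon>(1) by simp
  also have "\<dots> < x - J" using \<epsilon>(2) by (simp add: field_simps)
  finally have small: "\<bar>\<theta>\<bar> * \<epsilon> < x - J" .
  interpret v: exp_family K a "tilted K a w \<theta>" lo hi by (rule exp_family_tilted)
  have "tilted_mean K a (tilted K a w \<theta>) 0 = t"
    using \<theta> by (simp add: tilted_mean_def v.tilted_zero)
  then have "eventually (\<lambda>n. 1/2 \<le> empirical_mean_prob K a (tilted K a w \<theta>) n {t-\<epsilon><..<t+\<epsilon>})
      sequentially"
    using v.eventually_prob_near_mean[OF \<epsilon>(1)] by simp
  moreover have "eventually (\<lambda>n. ln 2 / real n < x - J - \<bar>\<theta>\<bar> * \<epsilon>) sequentially"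
    using small by (intro order_tendstoD(2)[OF tendsto_ln2_div]) auto
  ultimately have "eventually (\<lambda>n. ereal (- x) \<le> log_rate n (empirical_mean_prob K a w n G))
      sequentially"
    using eventually_gt_at_top[of 0]
  proof eventually_elim
    case (elim n)
    have "real n * (ln 2 / real n) < real n * (x - J - \<bar>\<theta>\<bar> * \<epsilon>)"
      using elim by (intro mult_strict_left_mono) auto
    then have "exp (real n * (- x)) \<le> exp (- real n * (J + \<bar>\<theta>\<bar> * \<epsilon>) - ln 2)"
      using elim by (simp add: algebra_simps)
    also have "\<dots> = exp (- real n * (J + \<bar>\<theta>\<bar> * \<epsilon>)) * (1/2)" by (simp add: exp_diff)
    also have "\<dots> \<le> exp (- real n * (J + \<bar>\<theta>\<bar> * \<epsilon>))
        * empirical_mean_prob K a (tilted K a w \<theta>) n {t-\<epsilon><..<t+\<epsilon>}"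
      using elim by (intro mult_left_mono) auto
    also have "\<dots> \<le> empirical_mean_prob K a w n {t-\<epsilon><..<t+\<epsilon>}"
      unfolding J_def using elim by (intro empirical_mean_prob_tilted_le) auto
    also have "\<dots> \<le> empirical_mean_prob K a w n G" using interval by (rule empirical_mean_prob_mono)
    finally show ?case using elim by (intro log_rate_ge) auto
  qed
  then show ?thesis by (rule Liminf_bounded)
qed

lemma cramer_lower_bound_at_atom:
  assumes "t \<in> G" "k < K" "a k = t"
  shows "ereal (ln (w k)) \<le> liminf (\<lambda>n. log_rate n (empirical_mean_prob K a w n G))"
proof (rule Liminf_bounded)
  show "eventually (\<lambda>n. ereal (ln (w k)) \<le> log_rate n (empirical_mean_prob K a w n G)) sequentially"
    using eventually_gt_at_top[of 0]
  proof eventually_elim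
    case (elim n)
    have "exp (real n * ln (w k)) = w k ^ n"
      using weight_pos[OF assms(2)] by (simp add: exp_of_nat_mult)
    also have "\<dots> \<le> empirical_mean_prob K a w n G"
      using assms elim by (intro power_weight_le_empirical_mean_prob) auto
    finally show ?case using elim by (intro log_rate_ge) auto
  qed
qed

lemma cramer_lower_bound_at:
  assumes G: "open G" "t \<in> G"
  shows "- cramer_rate K a w t \<le> liminf (\<lambda>n. log_rate n (empirical_mean_prob K a w n G))"
proof -
  consider "t < a lo" | "t = a lo" | "a lo < t \<and> t < a hi" | "t = a hi" | "a hi < t"
    by linarith
  then show ?thesis
  proof cases
    case 1 then show ?thesis using cramer_rate_below by simp
  next
    case 2 then show ?thesis using cramer_lower_bound_at_atom[OF G(2) lo_less] cramer_rate_a_lo by simp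
  next
    case 3
    then obtain \<theta> where \<theta>: "tilted_mean K a w \<theta> = t" using tilted_mean_surj by blast
    have "ereal (- (\<theta> * t - cgf K a w \<theta>)) \<le> liminf (\<lambda>n. log_rate n (empirical_mean_prob K a w n G))"
    proof (rule dense_le)
      fix z assume z: "z < ereal (- (\<theta> * t - cgf K a w \<theta>))"
      show "z \<le> liminf (\<lambda>n. log_rate n (empirical_mean_prob K a w n G))"
      proof (cases z)
        case (real y)
        then have "ereal (- (- y)) \<le> liminf (\<lambda>n. log_rate n (empirical_mean_prob K a w n G))"
          using z by (intro cramer_lower_bound_at_tilted_mean[OF G \<theta>]) auto
        then show ?thesis using real by simp
      qed (use z in auto)
    qed
    then show ?thesis using cramer_rate_tilted_mean[of \<theta>] \<theta> by simp
  next
    case 4 then show ?thesis using cramer_lower_bound_at_atom[OF G(2) hi_less] cramer_rate_a_hi by simp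
  next
    case 5 then show ?thesis using cramer_rate_above by simp
  qed
qed

lemma cramer_lower_bound:
  assumes "open G"
  shows "- (INF t\<in>G. cramer_rate K a w t) \<le> liminf (\<lambda>n. log_rate n (empirical_mean_prob K a w n G))"
proof -
  have "- liminf (\<lambda>n. log_rate n (empirical_mean_prob K a w n G)) \<le> (INF t\<in>G. cramer_rate K a w t)"
    using cramer_lower_bound_at[OF assms] by (intro INF_greatest) (simp add: ereal_uminus_le_reorder)
  then show ?thesis by (simp add: ereal_uminus_le_reorder)
qed

theorem cramer_LDP: "LDP (empirical_mean_prob K a w) (cramer_rate K a w)"
  unfolding LDP_def
proof (intro conjI allI ballI)
  fix B :: "real set"
  let ?r = "\<lambda>B n. log_rate n (empirical_mean_prob K a w n B)"
  have "liminf (?r (interior B)) \<le> liminf (?r B)"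
    by (intro Liminf_mono always_eventually allI log_rate_mono empirical_mean_prob_mono interior_subset)
  then show "- (INF t\<in>interior B. cramer_rate K a w t) \<le> liminf (?r B)"
    using cramer_lower_bound[OF open_interior] by (rule order.trans[rotated])
  have "limsup (?r B) \<le> limsup (?r (closure B))"
    by (intro Limsup_mono always_eventually allI log_rate_mono empirical_mean_prob_mono closure_subset)
  then show "limsup (?r B) \<le> - (INF t\<in>closure B. cramer_rate K a w t)"
    using cramer_upper_bound[OF closed_closure] by (rule order.trans)
  show "liminf (?r B) \<le> limsup (?r B)" by (rule Liminf_le_Limsup) simp
qed (use cramer_rate_nonneg open_cramer_rate_superlevel compact_cramer_rate_sublevel in auto)

end

lemma exp_family_cong:
  assumes "exp_family K a v lo hi" "\<And>k. k < K \<Longrightarrow> v' k = v k"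
  shows "exp_family K a v' lo hi"
proof -
  interpret exp_family K a v lo hi by (rule assms(1))
  have "(\<Sum>k<K. v' k) = (\<Sum>k<K. v k)" by (rule sum.cong) (simp_all add: assms(2))
  then have "(\<Sum>k<K. v' k) = 1" using weight_sum by simp
  then show ?thesis
    by unfold_locales
      (use weight_pos assms(2) lo_less hi_less lo_ne_hi a_lo_less a_less_hi in auto)
qed

locale mismatched_tilt = exp_family K a p lo hi
  for K :: nat and a p :: "nat \<Rightarrow> real" and lo hi :: nat +
  fixes q :: "nat \<Rightarrow> real"
  assumes q_eq_exp: "\<And>k. k < K \<Longrightarrow> q k = exp (- a k)"
begin

lemma tilt_eq_tilted:
  assumes "k < K"
  shows "tilt K q p \<beta> k = tilted K a p (- \<beta>) k"
proof -
  have pw: "q j powr \<beta> = exp (- \<beta> * a j)" if "j < K" for j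
    using q_eq_exp[OF that] by (simp add: powr_def)
  have "mgf K a p (- \<beta>) = (\<Sum>j<K. p j * q j powr \<beta>)"
    unfolding mgf_def by (intro sum.cong) (auto simp: pw)
  then show ?thesis unfolding tilt_def tilted_def using pw[OF assms] by simp
qed

lemma ln_one_div_q: "k < K \<Longrightarrow> ln (1 / q k) = a k"
  by (simp add: q_eq_exp ln_div)

lemma cross_ent_tilt: "cross_ent K (tilt K q p \<beta>) q = tilted_mean K a p (- \<beta>)"
  unfolding cross_ent_def tilted_mean_def
  by (intro sum.cong) (auto simp: tilt_eq_tilted ln_one_div_q)

lemma continuous_on_cross_ent_tilt: "continuous_on UNIV (\<lambda>\<beta>. cross_ent K (tilt K q p \<beta>) q)"
  unfolding cross_ent_tilt
  by (rule continuous_on_compose2[OF continuous_on_tilted_mean]) (auto intro: continuous_intros)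

lemma cross_ent_tilt_strict_antimono:
  "\<beta>1 < \<beta>2 \<Longrightarrow> cross_ent K (tilt K q p \<beta>2) q < cross_ent K (tilt K q p \<beta>1) q"
  unfolding cross_ent_tilt by (rule tilted_mean_strict_mono) simp

lemma bij_cross_ent_tilt: "bij_betw (\<lambda>\<beta>. cross_ent K (tilt K q p \<beta>) q) UNIV {a lo<..<a hi}"
proof -
  have "bij_betw (tilted_mean K a p \<circ> uminus) UNIV {a lo<..<a hi}"
    using bij_uminus bij_tilted_mean by (rule bij_betw_trans)
  then show ?thesis by (simp add: cross_ent_tilt o_def)
qed

lemma neg_reward_prob_eq: "neg_reward_prob K q r = empirical_mean_prob K a r"
proof (intro ext)
  fix m B
  have "- (1 / real m) * ln (\<Prod>i<m. q (y i)) = (\<Sum>i<m. a (y i)) / real m"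
    if "y \<in> PiE {..<m} (\<lambda>_. {..<K})" for y
  proof -
    have "(\<Prod>i<m. q (y i)) = (\<Prod>i<m. exp (- a (y i)))"
      using that by (intro prod.cong) (auto simp: PiE_iff q_eq_exp)
    then show ?thesis by (simp add: exp_sum[symmetric] sum_negf)
  qed
  then show "neg_reward_prob K q r m B = empirical_mean_prob K a r m B"
    unfolding neg_reward_prob_def empirical_mean_prob_def sum.inter_filter[OF finite_words]
    by (intro sum.cong) auto
qed

lemma exp_family_tilt: "exp_family K a (tilt K q p \<alpha>) lo hi"
  using exp_family_tilted by (rule exp_family_cong) (rule tilt_eq_tilted)

lemma tilted_tilt:
  assumes "k < K"
  shows "tilted K a (tilt K q p \<alpha>) \<theta> k = tilt K q p (\<alpha> - \<theta>) k"
proof -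
  have "mgf K a (tilt K q p \<alpha>) = mgf K a (tilted K a p (- \<alpha>))"
    by (rule mgf_cong) (rule tilt_eq_tilted)
  then have "tilted K a (tilt K q p \<alpha>) \<theta> k = tilted K a (tilted K a p (- \<alpha>)) \<theta> k"
    using assms by (simp add: tilted_def tilt_eq_tilted)
  also have "\<dots> = tilt K q p (\<alpha> - \<theta>) k"
    using assms by (simp add: tilted_tilted tilt_eq_tilted)
  finally show ?thesis .
qed

lemma cramer_rate_tilt_cross_ent:
  "cramer_rate K a (tilt K q p \<alpha>) (cross_ent K (tilt K q p \<beta>) q)
     = ereal (KL K (tilt K q p \<beta>) (tilt K q p \<alpha>))"
proof -
  interpret \<phi>: exp_family K a "tilt K q p \<alpha>" lo hi by (rule exp_family_tilt)
  have "cross_ent K (tilt K q p \<beta>) q = tilted_mean K a (tilt K q p \<alpha>) (\<alpha> - \<beta>)"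
    unfolding cross_ent_tilt tilted_mean_def
    by (intro sum.cong) (auto simp: tilted_tilt tilt_eq_tilted)
  moreover have "KL K (tilt K q p \<beta>) (tilt K q p \<alpha>)
      = KL K (tilted K a (tilt K q p \<alpha>) (\<alpha> - \<beta>)) (tilt K q p \<alpha>)"
    unfolding KL_def by (intro sum.cong) (auto simp: tilted_tilt)
  ultimately show ?thesis using \<phi>.cramer_rate_eq_KL by simp
qed

lemma rate_function_eq:
  "(\<lambda>t. if t \<in> {a lo<..<a hi}
        then ereal (KL K (tilt K q p (THE \<beta>. cross_ent K (tilt K q p \<beta>) q = t)) (tilt K q p \<alpha>))
        else if t = a lo then ereal (ln (1 / tilt K q p \<alpha> lo))
        else if t = a hi then ereal (ln (1 / tilt K q p \<alpha> hi))
        else \<infinity>) = cramer_rate K a (tilt K q p \<alpha>)" (is "?J = ?I")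
proof
  fix t
  interpret \<phi>: exp_family K a "tilt K q p \<alpha>" lo hi by (rule exp_family_tilt)
  have lo_hi: "a lo < a hi" using a_less_hi[OF lo_less] lo_ne_hi by simp
  consider "t \<in> {a lo<..<a hi}" | "t = a lo" | "t = a hi" | "t < a lo" | "a hi < t" by fastforce
  then show "?J t = ?I t"
  proof cases
    case 1
    then have "t \<in> range (\<lambda>\<beta>. cross_ent K (tilt K q p \<beta>) q)"
      using bij_betw_imp_surj_on[OF bij_cross_ent_tilt] by simp
    then obtain \<beta> where \<beta>: "cross_ent K (tilt K q p \<beta>) q = t" by blast
    have "(THE \<beta>. cross_ent K (tilt K q p \<beta>) q = t) = \<beta>"
    proof (rule the_equality)
      fix \<beta>' assume "cross_ent K (tilt K q p \<beta>') q = t"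
      then have "cross_ent K (tilt K q p \<beta>') q = cross_ent K (tilt K q p \<beta>) q" using \<beta> by simp
      then show "\<beta>' = \<beta>" by (rule injD[OF bij_betw_imp_inj_on[OF bij_cross_ent_tilt]])
    qed (rule \<beta>)
    then show ?thesis using 1 \<beta> cramer_rate_tilt_cross_ent[of \<alpha> \<beta>] by simp
  next
    case 2
    then show ?thesis using \<phi>.cramer_rate_a_lo \<phi>.weight_pos[OF lo_less] by (simp add: ln_div)
  next
    case 3
    then show ?thesis using \<phi>.cramer_rate_a_hi \<phi>.weight_pos[OF hi_less] lo_hi by (simp add: ln_div)
  next
    case 4
    then show ?thesis using \<phi>.cramer_rate_below lo_hi by auto
  next
    case 5
    then show ?thesis using \<phi>.cramer_rate_above lo_hi by auto
  qed
qed

lemma LDP_neg_reward: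
  "LDP (neg_reward_prob K q (tilt K q p \<alpha>))
     (\<lambda>t. if t \<in> {a lo<..<a hi}
          then ereal (KL K (tilt K q p (THE \<beta>. cross_ent K (tilt K q p \<beta>) q = t)) (tilt K q p \<alpha>))
          else if t = a lo then ereal (ln (1 / tilt K q p \<alpha> lo))
          else if t = a hi then ereal (ln (1 / tilt K q p \<alpha> hi))
          else \<infinity>)"
  unfolding neg_reward_prob_eq rate_function_eq
  by (rule exp_family.cramer_LDP[OF exp_family_tilt])

end

lemma mismatched_tilt_in_S:
  assumes "2 \<le> K" "0 < \<zeta>" "in_S K \<zeta> p" "in_S K \<zeta> q"
    and "kmax < K" "\<forall>k<K. q k \<le> q kmax" "kmin < K" "\<forall>k<K. q kmin \<le> q k"
  shows "mismatched_tilt K (\<lambda>k. ln (1 / q k)) p kmax kmin q"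
proof -
  have q_pos: "0 < q k" if "k < K" for k using assms(2,4) that unfolding in_S_def by force
  have q_inj: "i = j" if "i < K" "j < K" "q i = q j" for i j
    using assms(4) that unfolding in_S_def by auto
  have q_lt_max: "q k < q kmax" if "k < K" "k \<noteq> kmax" for k
    using assms(5,6) q_inj[of k kmax] that by force
  have q_gt_min: "q kmin < q k" if "k < K" "k \<noteq> kmin" for k
    using assms(7,8) q_inj[of k kmin] that by force
  have "\<exists>k<K. k \<noteq> kmax"
    using assms(1) by (intro exI[of _ "if kmax = 0 then 1 else 0"]) auto
  then obtain k where k: "k < K" "k \<noteq> kmax" by blast
  show ?thesis
  proof (intro mismatched_tilt.intro mismatched_tilt_axioms.intro exp_family.intro)
    show "0 < p k" if "k < K" for k using assms(2,3) that unfolding in_S_def by force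
    show "(\<Sum>k<K. p k) = 1" using assms(3) unfolding in_S_def by simp
    show "kmax \<noteq> kmin" using q_lt_max[OF k] assms(8) k(1) by force
    show "ln (1 / q kmax) < ln (1 / q k)" if "k < K" "k \<noteq> kmax" for k
      using q_lt_max[OF that] q_pos[OF that(1)] q_pos[OF assms(5)] by (simp add: ln_div)
    show "ln (1 / q k) < ln (1 / q kmin)" if "k < K" "k \<noteq> kmin" for k
      using q_gt_min[OF that] q_pos[OF that(1)] q_pos[OF assms(7)] by (simp add: ln_div)
    show "q k = exp (- ln (1 / q k))" if "k < K" for k
      using q_pos[OF that] by (simp add: ln_div)
  qed (use assms(5,7) in auto)
qed

text \<open>Whatever value \<open>alpha_of\<close> takes, \<open>\<phi>\<^sub>\<delta>\<close> is a tilt of \<open>p\<close>.\<close>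

theorem mainTheorem4:
  fixes K :: nat and \<zeta> :: real and p q :: "nat \<Rightarrow> real"
    and kmax kmin :: nat and \<delta> :: real
  assumes "K \<ge> 2" and "0 < \<zeta>" and "\<zeta> < 1 / real K"
    and "in_S K \<zeta> p" and "in_S K \<zeta> q"
    and "kmax < K" and "\<forall>k<K. q k \<le> q kmax"
    and "kmin < K" and "\<forall>k<K. q kmin \<le> q k"
    and "0 \<le> \<delta>" and "\<delta> < ln (1 / p kmax)"
  shows "continuous_on UNIV (\<lambda>\<beta>. cross_ent K (tilt K q p \<beta>) q)
       \<and> (\<forall>\<beta>1 \<beta>2. \<beta>1 < \<beta>2 \<longrightarrow>
            cross_ent K (tilt K q p \<beta>2) q < cross_ent K (tilt K q p \<beta>1) q)
       \<and> bij_betw (\<lambda>\<beta>. cross_ent K (tilt K q p \<beta>) q) UNIV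
            {ln (1 / q kmax) <..< ln (1 / q kmin)}
       \<and> LDP (neg_reward_prob K q (phi K q p \<delta>))
           (\<lambda>t. if t \<in> {ln (1 / q kmax) <..< ln (1 / q kmin)}
                 then ereal (KL K (tilt K q p
                        (THE \<beta>. cross_ent K (tilt K q p \<beta>) q = t)) (phi K q p \<delta>))
                 else if t = ln (1 / q kmax) then ereal (ln (1 / phi K q p \<delta> kmax))
                 else if t = ln (1 / q kmin) then ereal (ln (1 / phi K q p \<delta> kmin))
                 else \<infinity>)"
proof -
  interpret mismatched_tilt K "\<lambda>k. ln (1 / q k)" p kmax kmin q
    using mismatched_tilt_in_S[OF assms(1,2,4-9)] .
  show ?thesis
    using continuous_on_cross_ent_tilt cross_ent_tilt_strict_antimono bij_cross_ent_tilt
      LDP_neg_reward[of "alpha_of K q p \<delta>"]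
    unfolding phi_def by blast
qed

end
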